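(* Let $k$ be a positive integer, $a=6k+1$, $b=a+2$, $c=a+4$, $S=\{a,b,c\}$, $G=\langle S\rangle$, $t=\lfloor 3k/2\rfloor$, and $\epsilon=0$ if $k$ is even, $\epsilon=1$ if $k$ is odd. Define $A_{i,k}=[ia,\,ia+4i]_2$ for $i\in[1,t]$, and for $i\in[t+1,2t+\epsilon]$ $B_{i,k}=[ia,\,ia+2(2(i-t-1)-\epsilon)]$, $C_{i,k}=[ia+2(2(i-t-1)-\epsilon+1),\,ia+2(2t+\epsilon)]_2$. Let $H_{4,k}=\{0\}\cup\bigcup_{i=1}^{t}A_{i,k}\cup\bigcup_{i=t+1}^{2t+\epsilon}(B_{i,k}\cup C_{i,k})\cup[(2t+\epsilon+1)a,\infty[$. Then: (1) $H_{4,k}$ is a submonoid of $(\mathbb{N},+,0)$ containing $S$; (2) $A_{i,k}<A_{i+1,k}$ for $i\in[1,t-1]$; if $k$ is even then $A_{t,k}<B_{t+1,k}$ and $B_{t+1,k}<C_{t+1,k}$, while if $k$ is odd then $B_{t+1,k}=\emptyset$ and $A_{t,k}<C_{t+1,k}$; $B_{i,k}<C_{i,k}$ for $i\in[t+2,2t+\epsilon]$; $C_{i,k}<B_{i+1,k}$ for $i\in[t+1,2t+\epsilon-1]$; and $C_{2t+\epsilon,k}<[(2t+\epsilon+1)a,\infty[$; (3) $G=H_{4,k}$; (4) $H_{4,k}$ is a $3$-permutation numerical semigroup.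
   Context: $\mathbb{N}=\{0,1,2,\dots\}$. A numerical semigroup is a submonoid $G$ of $(\mathbb{N},+,0)$ with $\mathbb{N}\setminus G$ finite; $\langle S\rangle$ is the submonoid generated by $S$. Writing the elements of a numerical semigroup as $0=g_0<g_1<g_2<\cdots$, it is an $n$-permutation numerical semigroup if it is generated by $\{g_1,\dots,g_n\}$ and for every $k\in\mathbb{N}$ the tuple $(g_{kn+1}\bmod n,\dots,g_{kn+n}\bmod n)$ contains exactly one representative of each residue class mod $n$. Notation: $[u,v]=\{x\in\mathbb{N}:u\le x\le v\}$ and $[u,v]_2=\{x\in[u,v]:x\equiv u\pmod 2\}$ (both empty if $u>v$); $[u,\infty[=\{x\in\mathbb{N}:x\ge u\}$. For nonempty $X,Y\subseteq\mathbb{N}$, $X<Y$ means $x<y$ for all $x\in X,y\in Y$. *)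

theory Defs
  imports Main "HOL-Library.Infinite_Set"
begin

definition submonoid :: "nat set \<Rightarrow> bool" where
  "submonoid M \<longleftrightarrow> 0 \<in> M \<and> (\<forall>x\<in>M. \<forall>y\<in>M. x + y \<in> M)"

inductive_set gen :: "nat set \<Rightarrow> nat set" for S :: "nat set" where
  gen_zero: "0 \<in> gen S"
| gen_base: "x \<in> S \<Longrightarrow> x \<in> gen S"
| gen_add: "x \<in> gen S \<Longrightarrow> y \<in> gen S \<Longrightarrow> x + y \<in> gen S"

definition numerical_semigroup :: "nat set \<Rightarrow> bool" where
  "numerical_semigroup G \<longleftrightarrow> submonoid G \<and> finite (UNIV - G)"

text \<open>g_j = enumerate G j is the j-th element of G (g_0 = 0).\<close>
definition perm_numerical_semigroup :: "nat \<Rightarrow> nat set \<Rightarrow> bool" where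
  "perm_numerical_semigroup n G \<longleftrightarrow> numerical_semigroup G
     \<and> G = gen (enumerate G ` {1..n})
     \<and> (\<forall>k. bij_betw (\<lambda>j. enumerate G (k * n + j) mod n) {1..n} {0..<n})"

text \<open>[u,v] and [u,v]_2 with integer bounds (empty when u > v).\<close>
definition ival :: "int \<Rightarrow> int \<Rightarrow> nat set" where
  "ival u v = {x. u \<le> int x \<and> int x \<le> v}"

definition ival2 :: "int \<Rightarrow> int \<Rightarrow> nat set" where
  "ival2 u v = {x \<in> ival u v. even (int x - u)}"

definition set_less :: "nat set \<Rightarrow> nat set \<Rightarrow> bool" (infix "<\<^sub>s" 50) where
  "X <\<^sub>s Y \<longleftrightarrow> X \<noteq> {} \<and> Y \<noteq> {} \<and> (\<forall>x\<in>X. \<forall>y\<in>Y. x < y)"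

definition aa :: "nat \<Rightarrow> nat" where "aa k = 6 * k + 1"
definition tt :: "nat \<Rightarrow> nat" where "tt k = (3 * k) div 2"
definition eps :: "nat \<Rightarrow> nat" where "eps k = (if even k then 0 else 1)"

definition Aset :: "nat \<Rightarrow> nat \<Rightarrow> nat set" where
  "Aset k i =
     ival2 (int i * int (aa k)) (int i * int (aa k) + 4 * int i)"

definition Bset :: "nat \<Rightarrow> nat \<Rightarrow> nat set" where
  "Bset k i = ival (int i * int (aa k))
     (int i * int (aa k) + 2 * (2 * (int i - int (tt k) - 1) - int (eps k)))"

definition Cset :: "nat \<Rightarrow> nat \<Rightarrow> nat set" where
  "Cset k i = ival2 (int i * int (aa k) + 2 * (2 * (int i - int (tt k) - 1) - int (eps k) + 1))
     (int i * int (aa k) + 2 * (2 * int (tt k) + int (eps k)))"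

definition Hset :: "nat \<Rightarrow> nat set" where
  "Hset k = {0} \<union> (\<Union>i\<in>{1..tt k}. Aset k i)
     \<union> (\<Union>i\<in>{tt k + 1..2 * tt k + eps k}. Bset k i \<union> Cset k i)
     \<union> {(2 * tt k + eps k + 1) * aa k..}"

end

theory Submission
  imports Defs
begin

text \<open>Every element of \<open>\<langle>a, a + 2, a + 4\<rangle>\<close> has the form \<open>i * a + 2 * j\<close> with \<open>j \<le> 2 * i\<close>.
  Writing a number as \<open>q * a + r\<close> with \<open>r < a\<close>, this means that \<open>r\<close> is even with \<open>r \<le> 4 * q\<close>,
  or \<open>r\<close> is odd with \<open>r + a + 4 \<le> 4 * q\<close>; for \<open>a = 6 * k + 1\<close> these conditions describe,
  band \<open>q\<close> by band, exactly the pieces \<open>A\<close>, \<open>B \<union> C\<close> and the final ray of \<open>Hset k\<close>.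

  For the permutation property, \<open>Hset k\<close> is enumerated by an explicit successor function and a
  closed formula for the position of each element. When two consecutive gaps are equal (both 2
  or both 1) the three elements involved have distinct residues mod 3. Unequal gaps occur only
  around the end of an \<open>A\<close>-band, of a \<open>B\<close>-block and of a \<open>C\<close>-block, and reducing the position
  formula mod 3 shows that no block \<open>g\<^sub>3\<^sub>m\<^sub>+\<^sub>1, g\<^sub>3\<^sub>m\<^sub>+\<^sub>2, g\<^sub>3\<^sub>m\<^sub>+\<^sub>3\<close> starts at a bad place
  there; the one exception, the jump \<open>a - 4 * q\<close> at the end of an \<open>A\<close>-band with
  \<open>q mod 3 = 2\<close>, is harmless because it is \<open>\<equiv> 2 (mod 3)\<close> like the gap before it.\<close>

section \<open>The monoid generated by \<open>a\<close>, \<open>a + 2\<close>, \<open>a + 4\<close>\<close>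

lemma sum_mem_gen_triple: "j \<le> 2 * i \<Longrightarrow> i * a + 2 * j \<in> gen {a, a + 2, a + 4}"
proof (induction i arbitrary: j)
  case 0
  then show ?case by (simp add: gen_zero)
next
  case (Suc i)
  define d where "d = j - min j (2 * i)"
  have d: "d \<le> 2" "j = min j (2 * i) + d"
    using Suc.prems by (auto simp: d_def)
  have "i * a + 2 * min j (2 * i) \<in> gen {a, a + 2, a + 4}"
    using Suc.IH by simp
  moreover have "a + 2 * d \<in> gen {a, a + 2, a + 4}"
    using d(1) by (intro gen_base) (auto simp: le_Suc_eq numeral_2_eq_2)
  ultimately have "(i * a + 2 * min j (2 * i)) + (a + 2 * d) \<in> gen {a, a + 2, a + 4}"
    by (rule gen_add)
  also have "(i * a + 2 * min j (2 * i)) + (a + 2 * d) = Suc i * a + 2 * j"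
    using d(2) by (simp add: algebra_simps)
  finally show ?case .
qed

lemma gen_triple_eq: "gen {a, a + 2, a + 4} = {i * a + 2 * j | i j. j \<le> 2 * i}"
proof (intro equalityI subsetI)
  fix x
  assume "x \<in> gen {a, a + 2, a + 4}"
  then show "x \<in> {i * a + 2 * j | i j. j \<le> 2 * i}"
  proof (induction rule: gen.induct)
    case gen_zero
    show ?case by force
  next
    case (gen_base x)
    then have "x = 1 * a + 2 * 0 \<or> x = 1 * a + 2 * 1 \<or> x = 1 * a + 2 * 2"
      by auto
    then show ?case by fastforce
  next
    case (gen_add x y)
    then obtain i j i' j' where "j \<le> 2 * i" "x = i * a + 2 * j" "j' \<le> 2 * i'" "y = i' * a + 2 * j'"
      by blast
    then show ?case
      by (intro CollectI exI[of _ "i + i'"] exI[of _ "j + j'"]) (auto simp: algebra_simps)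
  qed
qed (use sum_mem_gen_triple in blast)

text \<open>For odd \<open>a\<close>, an even remainder \<open>r = 2 * j\<close> of \<open>q * a + r\<close> requires \<open>j \<le> 2 * q\<close>, while an odd
  one is \<open>r = 2 * j - a\<close> with \<open>j \<le> 2 * (q - 1)\<close>.\<close>
definition layer_mem :: "nat \<Rightarrow> nat \<Rightarrow> nat \<Rightarrow> bool" where
  "layer_mem a q r \<longleftrightarrow> (even r \<and> r \<le> 4 * q) \<or> (odd r \<and> r + a + 4 \<le> 4 * q)"

lemma layer_mem_iff_sum_form:
  assumes "odd a"
  shows "layer_mem a (x div a) (x mod a) \<longleftrightarrow> (\<exists>i j. j \<le> 2 * i \<and> x = i * a + 2 * j)"
proof
  assume "\<exists>i j. j \<le> 2 * i \<and> x = i * a + 2 * j"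
  then obtain i j where ij: "j \<le> 2 * i" "x = i * a + 2 * j"
    by blast
  define m r where "m = (2 * j) div a" "r = (2 * j) mod a"
  have a0: "0 < a"
    using assms by (cases a) auto
  have s: "2 * j = m * a + r" "r < a"
    by (simp_all add: m_r_def a0)
  have "x = (i + m) * a + r"
    using ij s by (simp add: algebra_simps)
  then have q: "x div a = i + m" "x mod a = r"
    using s(2) by simp_all
  have par: "even r \<longleftrightarrow> even m"
  proof -
    have "even (m * a + r)"
      using s(1) by (metis dvd_triv_left)
    then show ?thesis
      using assms by auto
  qed
  show "layer_mem a (x div a) (x mod a)"
  proof (cases "even m")
    case True
    then show ?thesis
      using par ij q s unfolding layer_mem_def by auto
  next
    case False
    then have "1 \<le> m"
      by (cases m) auto
    then have "r + a \<le> 4 * i"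
      using s ij mult_le_mono1[of 1 m a] by linarith
    then show ?thesis
      using False par q \<open>1 \<le> m\<close> unfolding layer_mem_def by auto
  qed
next
  assume c: "layer_mem a (x div a) (x mod a)"
  define q r where "q = x div a" "r = x mod a"
  have x: "x = q * a + r"
    by (simp add: q_r_def)
  show "\<exists>i j. j \<le> 2 * i \<and> x = i * a + 2 * j"
  proof (cases "even r")
    case True
    then show ?thesis
      using c x unfolding layer_mem_def q_r_def[symmetric]
      by (intro exI[of _ q] exI[of _ "r div 2"]) auto
  next
    case False
    have h: "r + a + 4 \<le> 4 * q"
      using c False unfolding layer_mem_def q_r_def[symmetric] by auto
    have "even (r + a)"
      using False assms by simp
    then have "x = (q - 1) * a + 2 * ((r + a) div 2)"
      using x h by (cases q) (auto simp: algebra_simps)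
    moreover have "(r + a) div 2 \<le> 2 * (q - 1)"
      using h by simp
    ultimately show ?thesis by blast
  qed
qed

lemma mem_gen_triple_iff:
  "odd a \<Longrightarrow> x \<in> gen {a, a + 2, a + 4} \<longleftrightarrow> layer_mem a (x div a) (x mod a)"
  using layer_mem_iff_sum_form[of a x] unfolding gen_triple_eq by blast

lemma submonoid_gen: "submonoid (gen S)"
  unfolding submonoid_def by (auto intro: gen.intros)

lemma tt_eps: "2 * tt k + eps k = 3 * k"
  unfolding tt_def eps_def by presburger

lemma tt_eps_int: "2 * int (tt k) + int (eps k) = 3 * int k"
  using tt_eps[of k] by linarith

lemma eps_le_1: "eps k \<le> 1"
  by (simp add: eps_def)

lemma tt_mod_3: "tt k mod 3 = eps k"
  unfolding tt_def eps_def by presburger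

lemma odd_aa: "odd (aa k)"
  by (simp add: aa_def)

lemma aa_pos: "0 < aa k"
  by (simp add: aa_def)

lemma tt_pos: "0 < k \<Longrightarrow> 0 < tt k"
  by (simp add: tt_def)

text \<open>The upper offset of \<open>Bset k (tt k + 1 + j)\<close>; it is \<open>-2\<close>, making that set empty, exactly
  when \<open>j = 0\<close> and \<open>k\<close> is odd.\<close>
definition Btop :: "nat \<Rightarrow> nat \<Rightarrow> int" where
  "Btop k j = 4 * int j - 2 * int (eps k)"

lemma even_Btop: "even (Btop k j)"
  by (simp add: Btop_def)

lemma layer_mem_low:
  "q \<le> tt k \<Longrightarrow> r < aa k \<Longrightarrow> layer_mem (aa k) q r \<longleftrightarrow> even r \<and> r \<le> 4 * q"
  using tt_eps[of k] by (auto simp: layer_mem_def aa_def)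

lemma layer_mem_mid:
  assumes "tt k < q" "q \<le> 3 * k" "r < aa k"
  shows "layer_mem (aa k) q r \<longleftrightarrow> even r \<or> int r \<le> Btop k (q - tt k - 1)"
proof -
  have "Btop k (q - tt k - 1) = 4 * int q - 4 * int (tt k) - 4 - 2 * int (eps k)"
    using assms by (simp add: Btop_def of_nat_diff)
  moreover have "odd r \<Longrightarrow> int r \<le> Btop k (q - tt k - 1) \<longleftrightarrow> int r + 1 \<le> Btop k (q - tt k - 1)"
    using even_Btop[of k "q - tt k - 1"] by presburger
  ultimately show ?thesis
    using assms eps_le_1[of k] tt_eps_int[of k] unfolding layer_mem_def aa_def by auto
qed

lemma layer_mem_high: "3 * k < q \<Longrightarrow> r < aa k \<Longrightarrow> layer_mem (aa k) q r"
  by (auto simp: layer_mem_def aa_def) presburger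

section \<open>Membership in \<open>Hset k\<close>\<close>

lemma mem_ival_band_iff:
  fixes lo hi :: int
  assumes "0 \<le> lo" "hi < int a"
  shows "x \<in> ival (int i * int a + lo) (int i * int a + hi) \<longleftrightarrow>
    x div a = i \<and> lo \<le> int (x mod a) \<and> int (x mod a) \<le> hi"
proof
  assume "x \<in> ival (int i * int a + lo) (int i * int a + hi)"
  then have h: "int i * int a + lo \<le> int x" "int x \<le> int i * int a + hi"
    by (simp_all add: ival_def)
  have "int (a * i) \<le> int x" "int x < int (a * Suc i)"
    using h assms by (simp_all add: algebra_simps)
  then have d: "x div a = i"
    by (intro div_nat_eqI) linarith+
  have "int (x mod a) = int x - int i * int a"
    using d by (metis add_diff_cancel_left' div_mult_mod_eq of_nat_add of_nat_mult add.commute)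
  then show "x div a = i \<and> lo \<le> int (x mod a) \<and> int (x mod a) \<le> hi"
    using d h by simp
next
  assume "x div a = i \<and> lo \<le> int (x mod a) \<and> int (x mod a) \<le> hi"
  moreover have "int x = int (x div a) * int a + int (x mod a)"
    by (metis div_mult_mod_eq of_nat_add of_nat_mult)
  ultimately show "x \<in> ival (int i * int a + lo) (int i * int a + hi)"
    by (simp add: ival_def)
qed

lemma mem_ival2_band_iff:
  fixes lo hi :: int
  assumes "0 \<le> lo" "hi < int a"
  shows "x \<in> ival2 (int i * int a + lo) (int i * int a + hi) \<longleftrightarrow>
    x div a = i \<and> lo \<le> int (x mod a) \<and> int (x mod a) \<le> hi \<and> even (int (x mod a) - lo)"
proof (cases "x div a = i")
  case True
  have "int x = int (x div a) * int a + int (x mod a)"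
    by (metis div_mult_mod_eq of_nat_add of_nat_mult)
  then have "int x - (int i * int a + lo) = int (x mod a) - lo"
    using True by simp
  then show ?thesis
    unfolding ival2_def mem_Collect_eq mem_ival_band_iff[OF assms] by metis
next
  case False
  then show ?thesis
    unfolding ival2_def using mem_ival_band_iff[OF assms, of x i] by auto
qed

lemma Bset_eq:
  assumes "tt k < i"
  shows "Bset k i = ival (int i * int (aa k)) (int i * int (aa k) + Btop k (i - tt k - 1))"
proof -
  have "Btop k (i - tt k - 1) = 2 * (2 * (int i - int (tt k) - 1) - int (eps k))"
    using assms by (simp add: Btop_def of_nat_diff)
  then show ?thesis
    by (simp add: Bset_def)
qed

lemma Cset_eq:
  assumes "tt k < i"
  shows "Cset k i =
    ival2 (int i * int (aa k) + (Btop k (i - tt k - 1) + 2)) (int i * int (aa k) + 6 * int k)"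
proof -
  have "2 * (2 * (int i - int (tt k) - 1) - int (eps k) + 1) = Btop k (i - tt k - 1) + 2"
    using assms by (simp add: Btop_def of_nat_diff)
  moreover have "2 * (2 * int (tt k) + int (eps k)) = 6 * int k"
    using tt_eps_int[of k] by simp
  ultimately show ?thesis
    by (simp only: Cset_def)
qed

lemma mem_Aset_iff:
  assumes "i \<le> tt k"
  shows "x \<in> Aset k i \<longleftrightarrow> x div aa k = i \<and> even (x mod aa k) \<and> x mod aa k \<le> 4 * i"
proof -
  have "4 * int i < int (aa k)"
    using assms tt_eps[of k] by (simp add: aa_def)
  then show ?thesis
    using mem_ival2_band_iff[of 0 "4 * int i" "aa k" x i] by (auto simp: Aset_def)
qed

lemma mem_Bset_Cset_iff:
  assumes "tt k < i" "i \<le> 3 * k"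
  shows "x \<in> Bset k i \<union> Cset k i \<longleftrightarrow>
    x div aa k = i \<and> (even (x mod aa k) \<or> int (x mod aa k) \<le> Btop k (i - tt k - 1))"
proof -
  define r b where "r = x mod aa k" "b = Btop k (i - tt k - 1)"
  have b: "-2 \<le> b" "b \<le> 6 * int k - 4"
    using assms tt_eps[of k] eps_le_1[of k] by (simp_all add: r_b_def Btop_def of_nat_diff)
  have "r < 6 * k + 1"
    by (simp add: r_b_def aa_def)
  then have r: "int r \<le> 6 * int k"
    by linarith
  have "x \<in> Bset k i \<longleftrightarrow> x div aa k = i \<and> int r \<le> b"
    using mem_ival_band_iff[of 0 b "aa k" x i] b
    by (auto simp: Bset_eq[OF assms(1)] r_b_def aa_def)
  moreover have "x \<in> Cset k i \<longleftrightarrow> x div aa k = i \<and> b + 2 \<le> int r \<and> even r"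
    using mem_ival2_band_iff[of "b + 2" "6 * int k" "aa k" x i] b r even_Btop[of k "i - tt k - 1"]
    by (auto simp: Cset_eq[OF assms(1)] r_b_def aa_def)
  moreover have "int n \<le> b \<or> b + 2 \<le> int n" if "even n" for n
  proof -
    have "even b"
      using even_Btop by (simp add: r_b_def)
    then show ?thesis
      using that by presburger
  qed
  ultimately show ?thesis
    unfolding r_b_def by auto
qed

lemma mem_Hset_iff: "x \<in> Hset k \<longleftrightarrow> layer_mem (aa k) (x div aa k) (x mod aa k)"
proof -
  define q r where "q = x div aa k" "r = x mod aa k"
  have r: "r < aa k"
    by (simp add: q_r_def aa_pos)
  have "x = 0 \<longleftrightarrow> q = 0 \<and> r = 0"
    by (metis q_r_def div_0 div_mult_mod_eq mod_0 mult_0 add_0)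
  moreover have "(\<exists>i\<in>{1..tt k}. x \<in> Aset k i) \<longleftrightarrow> 1 \<le> q \<and> q \<le> tt k \<and> even r \<and> r \<le> 4 * q"
    using mem_Aset_iff unfolding q_r_def by auto
  moreover have "(\<exists>i\<in>{tt k + 1..3 * k}. x \<in> Bset k i \<union> Cset k i) \<longleftrightarrow>
      tt k < q \<and> q \<le> 3 * k \<and> (even r \<or> int r \<le> Btop k (q - tt k - 1))"
    using mem_Bset_Cset_iff unfolding q_r_def by auto
  moreover have "x \<in> {(2 * tt k + eps k + 1) * aa k..} \<longleftrightarrow> 3 * k < q"
    unfolding tt_eps q_r_def atLeast_iff less_eq_div_iff_mult_less_eq[OF aa_pos, symmetric]
    by linarith
  moreover have "x \<in> Hset k \<longleftrightarrow> x = 0 \<or> (\<exists>i\<in>{1..tt k}. x \<in> Aset k i)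
      \<or> (\<exists>i\<in>{tt k + 1..3 * k}. x \<in> Bset k i \<union> Cset k i) \<or> x \<in> {(2 * tt k + eps k + 1) * aa k..}"
    unfolding Hset_def tt_eps by blast
  moreover have "layer_mem (aa k) q r \<longleftrightarrow> (q = 0 \<and> r = 0) \<or> (1 \<le> q \<and> q \<le> tt k \<and> even r \<and> r \<le> 4 * q)
      \<or> (tt k < q \<and> q \<le> 3 * k \<and> (even r \<or> int r \<le> Btop k (q - tt k - 1))) \<or> 3 * k < q"
  proof -
    have "tt k \<le> 3 * k"
      using tt_eps[of k] by linarith
    then consider "q = 0" | "1 \<le> q" "q \<le> tt k" | "tt k < q" "q \<le> 3 * k" | "3 * k < q"
      by linarith
    then show ?thesis
    proof cases
      case 1
      then show ?thesis using layer_mem_low[OF _ r, of q] by auto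
    next
      case 2
      then show ?thesis using layer_mem_low[OF 2(2) r] \<open>tt k \<le> 3 * k\<close> by auto
    next
      case 3
      then show ?thesis using layer_mem_mid[OF 3 r] by auto
    next
      case 4
      then show ?thesis using layer_mem_high[OF 4 r] \<open>tt k \<le> 3 * k\<close> by auto
    qed
  qed
  ultimately show ?thesis
    unfolding q_r_def by argo
qed

theorem gen_eq_Hset: "gen {aa k, aa k + 2, aa k + 4} = Hset k"
  using mem_gen_triple_iff[OF odd_aa] mem_Hset_iff by blast

section \<open>Order of the pieces\<close>

lemma set_less_if_ival:
  "X \<subseteq> ival u v \<Longrightarrow> Y \<subseteq> ival u' v' \<Longrightarrow> X \<noteq> {} \<Longrightarrow> Y \<noteq> {} \<Longrightarrow> v < u' \<Longrightarrow> X <\<^sub>s Y"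
  unfolding set_less_def ival_def by fastforce

lemma ival_nonempty: "0 \<le> u \<Longrightarrow> u \<le> v \<Longrightarrow> ival u v \<noteq> {}"
  by (auto simp: ival_def intro!: exI[of _ "nat u"])

lemma ival2_nonempty:
  assumes "0 \<le> u" "u \<le> v"
  shows "ival2 u v \<noteq> {}"
proof -
  have "nat u \<in> ival2 u v"
    using assms by (simp add: ival2_def ival_def even_nat_iff)
  then show ?thesis
    by blast
qed

lemma ival2_subset: "ival2 u v \<subseteq> ival u v"
  by (auto simp: ival2_def)

lemma Aset_subset: "Aset k i \<subseteq> ival (int i * int (aa k)) (int i * int (aa k) + 4 * int i)"
  unfolding Aset_def by (rule ival2_subset)

lemma Aset_nonempty: "Aset k i \<noteq> {}"
  unfolding Aset_def by (rule ival2_nonempty) auto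

lemma Cset_subset:
  "tt k < i \<Longrightarrow> Cset k i \<subseteq>
    ival (int i * int (aa k) + (Btop k (i - tt k - 1) + 2)) (int i * int (aa k) + 6 * int k)"
  unfolding Cset_eq by (rule ival2_subset)

lemma Cset_nonempty:
  assumes "tt k < i" "i \<le> 3 * k"
  shows "Cset k i \<noteq> {}"
proof -
  have "-2 \<le> Btop k (i - tt k - 1)" "Btop k (i - tt k - 1) \<le> 6 * int k - 4"
    using assms tt_eps[of k] eps_le_1[of k] by (simp_all add: Btop_def of_nat_diff)
  then show ?thesis
    unfolding Cset_eq[OF assms(1)] by (intro ival2_nonempty) auto
qed

lemma Bset_nonempty:
  assumes "tt k < i" "tt k + 2 \<le> i \<or> even k"
  shows "Bset k i \<noteq> {}"
proof -
  have "0 \<le> Btop k (i - tt k - 1)"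
    using assms eps_le_1[of k] by (auto simp: Btop_def eps_def)
  then show ?thesis
    unfolding Bset_eq[OF assms(1)] by (intro ival_nonempty) auto
qed

lemma Bset_empty: "odd k \<Longrightarrow> Bset k (tt k + 1) = {}"
  by (auto simp: Bset_eq Btop_def eps_def ival_def)

lemma Aset_less_Aset: "i < tt k \<Longrightarrow> Aset k i <\<^sub>s Aset k (i + 1)"
proof (rule set_less_if_ival[OF Aset_subset Aset_subset Aset_nonempty Aset_nonempty])
  assume "i < tt k"
  then show "int i * int (aa k) + 4 * int i < int (i + 1) * int (aa k)"
    using tt_eps_int[of k] by (simp add: aa_def algebra_simps)
qed

lemma Aset_less_Bset: "even k \<Longrightarrow> Aset k (tt k) <\<^sub>s Bset k (tt k + 1)"
  by (rule set_less_if_ival[OF Aset_subset _ Aset_nonempty Bset_nonempty])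
    (use tt_eps_int[of k] in \<open>auto simp: Bset_eq aa_def algebra_simps\<close>)

lemma Aset_less_Cset: "odd k \<Longrightarrow> Aset k (tt k) <\<^sub>s Cset k (tt k + 1)"
  by (rule set_less_if_ival[OF Aset_subset Cset_subset Aset_nonempty Cset_nonempty])
    (use tt_eps_int[of k] in \<open>auto simp: Btop_def eps_def aa_def algebra_simps\<close>)

lemma Bset_less_Cset:
  "tt k < i \<Longrightarrow> i \<le> 3 * k \<Longrightarrow> tt k + 2 \<le> i \<or> even k \<Longrightarrow> Bset k i <\<^sub>s Cset k i"
  by (rule set_less_if_ival[OF _ Cset_subset Bset_nonempty Cset_nonempty]) (auto simp: Bset_eq)

lemma Cset_less_Bset: "tt k < i \<Longrightarrow> i < 3 * k \<Longrightarrow> Cset k i <\<^sub>s Bset k (i + 1)"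
  by (rule set_less_if_ival[OF Cset_subset _ Cset_nonempty Bset_nonempty])
    (auto simp: Bset_eq aa_def algebra_simps)

lemma Cset_less_tail:
  assumes "0 < k"
  shows "Cset k (3 * k) <\<^sub>s {(3 * k + 1) * aa k..}"
proof -
  have t: "tt k < 3 * k"
    using assms tt_eps[of k] tt_pos[of k] by linarith
  have "x < y" if "x \<in> Cset k (3 * k)" "(3 * k + 1) * aa k \<le> y" for x y
  proof -
    have "int x \<le> int (3 * k) * int (aa k) + 6 * int k"
      using Cset_subset[OF t] that(1) by (auto simp: ival_def)
    moreover have "int ((3 * k + 1) * aa k) = int (3 * k) * int (aa k) + 6 * int k + 1"
      by (simp add: aa_def algebra_simps)
    ultimately have "x < (3 * k + 1) * aa k"
      by (simp only: of_nat_less_iff[symmetric])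
    then show ?thesis
      using that(2) by linarith
  qed
  then show ?thesis
    using Cset_nonempty[OF t] unfolding set_less_def by auto
qed

lemma enumerate_Suc_eq_next:
  fixes H :: "nat set"
  assumes "infinite H"
    and succ: "\<And>y. y \<in> H \<Longrightarrow> nxt y \<in> H \<and> y < nxt y \<and> (\<forall>x\<in>H. y < x \<longrightarrow> nxt y \<le> x)"
  shows "enumerate H (Suc n) = nxt (enumerate H n)"
proof -
  have y: "enumerate H n \<in> H"
    using enumerate_in_set[OF assms(1)] .
  have "(LEAST s. s \<in> H \<and> enumerate H n < s) = nxt (enumerate H n)"
    by (rule Least_equality) (use succ[OF y] in auto)
  then show ?thesis
    using enumerate_Suc''[OF assms(1)] by simp
qed

lemma index_enumerate:
  fixes H :: "nat set" and idx :: "nat \<Rightarrow> 'a :: semiring_1"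
  assumes "infinite H"
    and succ: "\<And>y. y \<in> H \<Longrightarrow> nxt y \<in> H \<and> y < nxt y \<and> (\<forall>x\<in>H. y < x \<longrightarrow> nxt y \<le> x)"
    and idx_0: "idx (enumerate H 0) = 0"
    and idx_next: "\<And>y. y \<in> H \<Longrightarrow> idx (nxt y) = idx y + 1"
  shows "idx (enumerate H n) = of_nat n"
proof (induction n)
  case 0
  then show ?case using idx_0 by simp
next
  case (Suc n)
  then show ?case
    using enumerate_Suc_eq_next[OF assms(1,2)] idx_next[OF enumerate_in_set[OF assms(1)]] by (simp add: add.commute)
qed

lemma bij_betw_mod_3_if_distinct:
  fixes f :: "nat \<Rightarrow> nat"
  assumes "distinct [f 1 mod 3, f 2 mod 3, f 3 mod 3]"
  shows "bij_betw (\<lambda>j. f j mod 3) {1..3} {0..<3}"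
proof -
  have dom: "{1..3::nat} = {1, 2, 3}"
    by auto
  have inj: "inj_on (\<lambda>j. f j mod 3) {1, 2, 3}"
    using assms by (auto simp: inj_on_def)
  have "card ((\<lambda>j. f j mod 3) ` {1, 2, 3}) = 3"
    using card_image[OF inj] by simp
  then have "(\<lambda>j. f j mod 3) ` {1, 2, 3} = {0..<3}"
    by (intro card_subset_eq) auto
  then show ?thesis
    unfolding dom bij_betw_def using inj by simp
qed

lemma distinct_mod_3_if_gaps:
  fixes y d d' :: nat
  assumes "d mod 3 = d' mod 3" "d mod 3 \<noteq> 0"
  shows "distinct [y mod 3, (y + d) mod 3, (y + d + d') mod 3]"
proof -
  define u e where "u = y mod 3" "e = d mod 3"
  have 1: "(y + d) mod 3 = (u + e) mod 3"
    unfolding u_e_def by (rule mod_add_eq[symmetric])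
  have 2: "(y + d + d') mod 3 = (u + e + e) mod 3"
    using assms(1) unfolding u_e_def by (metis mod_add_eq mod_mod_trivial)
  have "u \<in> {0, 1, 2}" "e \<in> {1, 2}"
    using assms(2) unfolding u_e_def by auto
  then show ?thesis
    unfolding 1 2 u_e_def[symmetric] by auto
qed

section \<open>Successor and position in \<open>Hset k\<close>\<close>

definition Hnext :: "nat \<Rightarrow> nat \<Rightarrow> nat" where
  "Hnext k y =
    (let q = y div aa k; r = y mod aa k in
     if q \<le> tt k then (if r < 4 * q then y + 2 else (q + 1) * aa k)
     else if q \<le> 3 * k \<and> Btop k (q - tt k - 1) \<le> int r \<and> r < 6 * k then y + 2
     else y + 1)"

text \<open>The number of elements of \<open>Hset k\<close> below \<open>(tt k + 1 + j) * aa k\<close>.\<close>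
definition mid_base :: "nat \<Rightarrow> nat \<Rightarrow> int" where
  "mid_base k j = (int (tt k) + 1)\<^sup>2 + int j * (int j - 1) + int j * (3 * int k + 1 - int (eps k))
     + (if j = 0 then 0 else int (eps k))"

text \<open>The position of a member \<open>q * aa k + r\<close> in the increasing enumeration of \<open>Hset k\<close>.\<close>
definition Hindex_at :: "nat \<Rightarrow> nat \<Rightarrow> nat \<Rightarrow> int" where
  "Hindex_at k q r =
    (if q \<le> tt k then int (q * q) + int (r div 2)
     else if q \<le> 3 * k then
       (let j = q - tt k - 1; h = Btop k j in
        if int r \<le> h then mid_base k j + int r
        else mid_base k j + max (h + 1) 0 + (int r - h) div 2 - 1)
     else mid_base k (tt k + eps k) + (int q - 3 * int k - 1) * int (aa k) + int r)"

definition Hindex :: "nat \<Rightarrow> nat \<Rightarrow> int" where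
  "Hindex k y = Hindex_at k (y div aa k) (y mod aa k)"

lemma div_mod_band: "r < aa k \<Longrightarrow> (q * aa k + r) div aa k = q \<and> (q * aa k + r) mod aa k = r"
  by (simp add: aa_pos)

lemma Hindex_band: "r < aa k \<Longrightarrow> Hindex k (q * aa k + r) = Hindex_at k q r"
  by (simp add: Hindex_def div_mod_band)

lemma Hnext_low:
  "q \<le> tt k \<Longrightarrow> r < aa k \<Longrightarrow>
    Hnext k (q * aa k + r) = (if r < 4 * q then q * aa k + r + 2 else (q + 1) * aa k)"
  by (simp add: Hnext_def div_mod_band)

lemma Hnext_mid:
  "tt k < q \<Longrightarrow> q \<le> 3 * k \<Longrightarrow> r < aa k \<Longrightarrow>
    Hnext k (q * aa k + r) =
      (if Btop k (q - tt k - 1) \<le> int r \<and> r < 6 * k then q * aa k + r + 2 else q * aa k + r + 1)"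
  by (simp add: Hnext_def div_mod_band)

lemma Hnext_high: "3 * k < q \<Longrightarrow> r < aa k \<Longrightarrow> Hnext k (q * aa k + r) = q * aa k + r + 1"
  using tt_eps[of k] by (simp add: Hnext_def div_mod_band)

lemma Hindex_at_low: "q \<le> tt k \<Longrightarrow> Hindex_at k q r = int (q * q) + int (r div 2)"
  by (simp add: Hindex_at_def)

lemma Hindex_at_mid:
  "tt k < q \<Longrightarrow> q \<le> 3 * k \<Longrightarrow> j = q - tt k - 1 \<Longrightarrow>
    Hindex_at k q r = (if int r \<le> Btop k j then mid_base k j + int r
      else mid_base k j + max (Btop k j + 1) 0 + (int r - Btop k j) div 2 - 1)"
  by (simp add: Hindex_at_def Let_def)

lemma Hindex_at_high:
  "3 * k < q \<Longrightarrow>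
    Hindex_at k q r = mid_base k (tt k + eps k) + (int q - 3 * int k - 1) * int (aa k) + int r"
  using tt_eps[of k] by (simp add: Hindex_at_def)

lemma Hnext_band_start:
  assumes "tt k + 1 < q"
  shows "Hnext k (q * aa k) = q * aa k + 1"
proof (cases "q \<le> 3 * k")
  case True
  have "int (eps k) \<le> 1" "1 \<le> int (q - tt k - 1)"
    using eps_le_1[of k] assms by simp_all
  then have "0 < Btop k (q - tt k - 1)"
    unfolding Btop_def by linarith
  then show ?thesis
    using Hnext_mid[OF _ True aa_pos] assms by simp
next
  case False
  then show ?thesis
    using Hnext_high[of k q 0] aa_pos[of k] by simp
qed

lemma mid_base_Suc:
  "mid_base k (j + 1) =
    mid_base k j + 2 * int j + 3 * int k + 1 - int (eps k) + (if j = 0 then int (eps k) else 0)"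
  by (simp add: mid_base_def algebra_simps)

text \<open>\<open>r'\<close> is the remainder of the successor of \<open>q * aa k + r\<close> in \<open>Hset k\<close>, where \<open>r' = aa k\<close>
  stands for the first element \<open>(q + 1) * aa k\<close> of the next band.\<close>
definition band_succ :: "nat \<Rightarrow> nat \<Rightarrow> nat \<Rightarrow> nat \<Rightarrow> bool" where
  "band_succ k q r r' \<longleftrightarrow> r < r' \<and> r' \<le> aa k \<and> (\<forall>s. r < s \<and> s < r' \<longrightarrow> \<not> layer_mem (aa k) q s) \<and>
     (if r' < aa k then layer_mem (aa k) q r' \<and> Hindex_at k q r' = Hindex_at k q r + 1
      else layer_mem (aa k) (q + 1) 0 \<and> Hindex_at k (q + 1) 0 = Hindex_at k q r + 1)"

lemma band_succ_low:
  assumes "0 < k" "r < aa k" "layer_mem (aa k) q r" "q \<le> tt k"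
  shows "\<exists>r'. Hnext k (q * aa k + r) = q * aa k + r' \<and> band_succ k q r r'"
proof -
  have mem: "layer_mem (aa k) q s \<longleftrightarrow> even s \<and> s \<le> 4 * q" if "s < aa k" for s
    using layer_mem_low[OF assms(4) that] .
  have r: "even r" "r \<le> 4 * q"
    using mem[OF assms(2)] assms(3) by auto
  have t: "4 * tt k \<le> 6 * k"
    using tt_eps[of k] by linarith
  show ?thesis
  proof (cases "r < 4 * q")
    case True
    have r2: "r + 2 \<le> 4 * q"
      using True r(1) by presburger
    then have lt: "r + 2 < aa k"
      using assms(4) t by (simp add: aa_def)
    have "\<not> layer_mem (aa k) q (r + 1)"
      using mem lt r(1) by simp
    moreover have "layer_mem (aa k) q (r + 2)"
      using mem[OF lt] r r2 by simp
    moreover have "Hindex_at k q (r + 2) = Hindex_at k q r + 1"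
      using Hindex_at_low[OF assms(4)] r(1) by auto
    ultimately have "band_succ k q r (r + 2)"
      unfolding band_succ_def using lt by (auto simp: less_Suc_eq numeral_2_eq_2)
    then show ?thesis
      using Hnext_low[OF assms(4,2)] True by (intro exI[of _ "r + 2"]) simp
  next
    case False
    then have r4: "r = 4 * q"
      using r(2) by linarith
    have next_band: "layer_mem (aa k) (q + 1) 0 \<and> Hindex_at k (q + 1) 0 = Hindex_at k q r + 1"
    proof (cases "q + 1 \<le> tt k")
      case True
      then show ?thesis
        using mem Hindex_at_low[OF True] Hindex_at_low[OF assms(4)] r4 layer_mem_low[OF True aa_pos]
        by (simp add: algebra_simps)
    next
      case False
      then have q: "q = tt k"
        using assms(4) by linarith
      have "layer_mem (aa k) (q + 1) 0"
        using layer_mem_mid[of k "q + 1" 0] q tt_eps[of k] tt_pos[OF assms(1)] aa_pos[of k] by simp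
      moreover have "Hindex_at k (q + 1) 0 = mid_base k 0"
        using Hindex_at_mid[of k "q + 1" 0 0] q tt_eps[of k] tt_pos[OF assms(1)] eps_le_1[of k]
        by (auto simp: Btop_def eps_def split: if_splits)
      moreover have "mid_base k 0 = Hindex_at k q r + 1"
        using Hindex_at_low[OF assms(4)] q r4 by (simp add: mid_base_def power2_eq_square algebra_simps)
      ultimately show ?thesis
        by simp
    qed
    have "band_succ k q r (aa k)"
      unfolding band_succ_def using assms(2) mem r4 next_band by auto
    then show ?thesis
      using Hnext_low[OF assms(4,2)] False by (intro exI[of _ "aa k"]) (simp add: algebra_simps)
  qed
qed

lemma next_band_start_mid:
  assumes "tt k < q" "q \<le> 3 * k"
  shows "layer_mem (aa k) (q + 1) 0 \<and> Hindex_at k (q + 1) 0 = mid_base k (q - tt k)"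
proof (cases "q + 1 \<le> 3 * k")
  case True
  have "int (eps k) \<le> 1" "1 \<le> int (q - tt k)"
    using eps_le_1[of k] assms(1) by simp_all
  then have "0 \<le> Btop k (q - tt k)"
    unfolding Btop_def by linarith
  then show ?thesis
    using Hindex_at_mid[of k "q + 1" "q - tt k" 0] layer_mem_mid[of k "q + 1" 0] True assms(1) aa_pos[of k]
    by simp
next
  case False
  then have "q = 3 * k" "tt k + eps k = q - tt k"
    using assms tt_eps[of k] by linarith+
  then show ?thesis
    using Hindex_at_high[of k "q + 1" 0] layer_mem_high[of k "q + 1" 0] aa_pos[of k] by simp
qed

lemma band_succ_mid:
  assumes "r < aa k" "layer_mem (aa k) q r" "tt k < q" "q \<le> 3 * k"
  shows "\<exists>r'. Hnext k (q * aa k + r) = q * aa k + r' \<and> band_succ k q r r'"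
proof -
  define j h where "j = q - tt k - 1" "h = Btop k j"
  have q: "q = tt k + 1 + j"
    using assms(3) j_h_def by simp
  have h: "h = 4 * int j - 2 * int (eps k)" "even h"
    by (simp_all add: j_h_def Btop_def)
  have hb: "h \<le> 6 * int k - 4" "-2 \<le> h"
    using h(1) q assms(4) tt_eps_int[of k] eps_le_1[of k] by linarith+
  have mem: "layer_mem (aa k) q s \<longleftrightarrow> even s \<or> int s \<le> h" if "s < aa k" for s
    using layer_mem_mid[OF assms(3,4) that] by (simp add: j_h_def)
  have idx: "Hindex_at k q s = (if int s \<le> h then mid_base k j + int s
      else mid_base k j + max (h + 1) 0 + (int s - h) div 2 - 1)" for s
    using Hindex_at_mid[OF assms(3,4)] by (simp add: j_h_def)
  have nx: "Hnext k (q * aa k + r) = (if h \<le> int r \<and> r < 6 * k then q * aa k + r + 2 else q * aa k + r + 1)"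
    using Hnext_mid[OF assms(3,4,1)] by (simp add: j_h_def)
  have r: "even r \<or> int r \<le> h"
    using mem[OF assms(1)] assms(2) by simp
  have a: "aa k = 6 * k + 1"
    by (simp add: aa_def)
  consider (B) "int r < h" | (C) "h \<le> int r" "r < 6 * k" | (last) "r = 6 * k"
    using assms(1) a by linarith
  then show ?thesis
  proof cases
    case B
    have lt: "r + 1 < aa k"
      using B hb a by linarith
    have "band_succ k q r (r + 1)"
      unfolding band_succ_def using lt B mem[OF lt] idx[of r] idx[of "r + 1"] by auto
    then show ?thesis
      using nx B by (intro exI[of _ "r + 1"]) simp
  next
    case C
    have even_r: "even r"
      using r C h(2) by presburger
    have lt: "r + 2 < aa k"
      using C even_r a by presburger
    have gap: "\<forall>s. r < s \<and> s < r + 2 \<longrightarrow> \<not> layer_mem (aa k) q s"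
    proof (intro allI impI)
      fix s
      assume "r < s \<and> s < r + 2"
      then have "s = r + 1"
        by linarith
      then show "\<not> layer_mem (aa k) q s"
        using mem[of "r + 1"] lt C even_r by auto
    qed
    have "layer_mem (aa k) q (r + 2)"
      using mem[OF lt] even_r by simp
    moreover have "Hindex_at k q (r + 2) = Hindex_at k q r + 1"
    proof (cases "int r \<le> h")
      case True
      then have "int r = h"
        using C by linarith
      then show ?thesis
        unfolding idx using hb by simp
    next
      case False
      then show ?thesis
        unfolding idx by simp
    qed
    ultimately have "band_succ k q r (r + 2)"
      unfolding band_succ_def using lt gap by simp
    then show ?thesis
      using nx C by (intro exI[of _ "r + 2"]) simp
  next
    case last
    have step: "mid_base k (j + 1) = Hindex_at k q r + 1"
    proof -
      have "Hindex_at k q r = mid_base k j + max (h + 1) 0 + (6 * int k - h) div 2 - 1"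
        unfolding idx using last hb by simp
      moreover have "2 * int j + 3 * int k + 1 - int (eps k) + (if j = 0 then int (eps k) else 0)
          = max (h + 1) 0 + (6 * int k - h) div 2"
        using h(1) eps_le_1[of k] by (auto simp: max_def eps_def)
      ultimately show ?thesis
        using mid_base_Suc[of k j] by simp
    qed
    have next_band: "layer_mem (aa k) (q + 1) 0 \<and> Hindex_at k (q + 1) 0 = Hindex_at k q r + 1"
      using next_band_start_mid[OF assms(3,4)] step q by simp
    have "band_succ k q r (aa k)"
      unfolding band_succ_def using assms(1) last a next_band by auto
    then show ?thesis
      using nx last a by (intro exI[of _ "aa k"]) simp
  qed
qed

lemma band_succ_high:
  assumes "r < aa k" "3 * k < q"
  shows "\<exists>r'. Hnext k (q * aa k + r) = q * aa k + r' \<and> band_succ k q r r'"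
proof -
  have "layer_mem (aa k) q (r + 1)" if "r + 1 < aa k"
    using layer_mem_high[OF assms(2) that] .
  moreover have "layer_mem (aa k) (q + 1) 0"
    using layer_mem_high[of k "q + 1" 0] assms(2) aa_pos[of k] by simp
  moreover have "Hindex_at k q (r + 1) = Hindex_at k q r + 1"
    using Hindex_at_high[OF assms(2)] by simp
  moreover have "Hindex_at k (q + 1) 0 = Hindex_at k q r + 1" if "r + 1 = aa k"
    using Hindex_at_high[OF assms(2), of r] Hindex_at_high[of k "q + 1" 0] assms(2) that
    by (simp add: algebra_simps)
  ultimately have "band_succ k q r (r + 1)"
    unfolding band_succ_def using assms(1) by auto
  then show ?thesis
    using Hnext_high[OF assms(2,1)] by (intro exI[of _ "r + 1"]) simp
qed

lemma band_succ_exists: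
  "0 < k \<Longrightarrow> r < aa k \<Longrightarrow> layer_mem (aa k) q r \<Longrightarrow>
    \<exists>r'. Hnext k (q * aa k + r) = q * aa k + r' \<and> band_succ k q r r'"
proof -
  assume "0 < k" "r < aa k" "layer_mem (aa k) q r"
  consider "q \<le> tt k" | "tt k < q" "q \<le> 3 * k" | "3 * k < q"
    by linarith
  then show ?thesis
    by cases (use band_succ_low[OF \<open>0 < k\<close>] band_succ_mid band_succ_high \<open>r < aa k\<close> \<open>layer_mem (aa k) q r\<close> in blast)+
qed

lemma div_mod_between:
  fixes a q r r' x :: nat
  assumes "q * a + r < x" "x < q * a + r'" "r' \<le> a"
  shows "x div a = q \<and> r < x mod a \<and> x mod a < r'"
proof -
  have "a * q \<le> x" "x < a * Suc q"
    using assms by (simp_all add: algebra_simps)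
  then have d: "x div a = q"
    by (rule div_nat_eqI)
  then have "x mod a = x - q * a"
    by (metis minus_div_mult_eq_mod)
  then show ?thesis
    using d assms by arith
qed

lemma Hnext_succ:
  assumes "0 < k" "y \<in> Hset k"
  shows "Hnext k y \<in> Hset k \<and> y < Hnext k y \<and> (\<forall>x\<in>Hset k. y < x \<longrightarrow> Hnext k y \<le> x)
    \<and> Hindex k (Hnext k y) = Hindex k y + 1"
proof -
  define q r where "q = y div aa k" "r = y mod aa k"
  have y: "y = q * aa k + r"
    by (simp add: q_r_def)
  have r: "r < aa k"
    by (simp add: q_r_def aa_pos)
  have "layer_mem (aa k) q r"
    using assms(2) mem_Hset_iff q_r_def by simp
  then obtain r' where nx: "Hnext k y = q * aa k + r'" and succ: "band_succ k q r r'"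
    using band_succ_exists[OF assms(1) r] y by blast
  have idx_y: "Hindex k y = Hindex_at k q r"
    using Hindex_band[OF r] y by simp
  have mem_idx: "Hnext k y \<in> Hset k \<and> Hindex k (Hnext k y) = Hindex k y + 1"
  proof (cases "r' < aa k")
    case True
    then show ?thesis
      using succ nx div_mod_band[OF True, of q] Hindex_band[OF True] idx_y mem_Hset_iff
      unfolding band_succ_def by simp
  next
    case False
    then have "Hnext k y = (q + 1) * aa k + 0"
      using succ nx unfolding band_succ_def by simp
    then show ?thesis
      using False succ idx_y div_mod_band[OF aa_pos, of "q + 1"] Hindex_band[OF aa_pos, of k "q + 1"]
        mem_Hset_iff[of "Hnext k y" k] unfolding band_succ_def by simp
  qed
  have "Hnext k y \<le> x" if "x \<in> Hset k" "y < x" for x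
  proof (rule ccontr)
    assume "\<not> Hnext k y \<le> x"
    then have "x div aa k = q \<and> r < x mod aa k \<and> x mod aa k < r'"
      using div_mod_between[of q "aa k" r x r'] succ nx y that(2) unfolding band_succ_def by simp
    then show False
      using succ that(1) mem_Hset_iff unfolding band_succ_def by auto
  qed
  then show ?thesis
    using mem_idx succ nx y unfolding band_succ_def by simp
qed

section \<open>Positions modulo 3\<close>

lemma square_mod_3: "(x * x) mod 3 = (if x mod 3 = 0 then 0 else 1)" for x :: int
proof -
  have "(x * x) mod 3 = ((x mod 3) * (x mod 3)) mod 3"
    by (simp add: mod_mult_eq)
  moreover have "x mod 3 \<in> {0, 1, 2}"
    by auto
  ultimately show ?thesis
    by auto
qed

lemma mid_base_mod_3:
  "mid_base k j mod 3 =
    (1 + int j * int j - int (eps k) * int j + (if j = 0 then 0 else int (eps k))) mod 3"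
proof -
  have "(int (tt k) + 1) mod 3 \<noteq> 0"
    using tt_mod_3[of k] eps_le_1[of k] by presburger
  then have sq: "(int (tt k) + 1)\<^sup>2 mod 3 = 1"
    using square_mod_3[of "int (tt k) + 1"] by (simp add: power2_eq_square)
  define A B C where "A = (int (tt k) + 1)\<^sup>2" "B = int j * int k"
    "C = int j * int j - int (eps k) * int j + (if j = 0 then 0 else int (eps k))"
  have "mid_base k j = A + 3 * B + C"
    unfolding A_B_C_def mid_base_def by (simp add: algebra_simps)
  moreover have "A mod 3 = 1"
    using sq by (simp add: A_B_C_def)
  ultimately have "mid_base k j mod 3 = (1 + C) mod 3"
    by presburger
  then show ?thesis
    unfolding A_B_C_def(3) by (simp add: algebra_simps)
qed

lemma low_end_index_mod_3: "(int (q * q) + int (2 * q)) mod 3 \<noteq> 1"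
proof -
  define Q where "Q = int q * int q"
  have "Q mod 3 = (if int q mod 3 = 0 then 0 else 1)"
    unfolding Q_def by (rule square_mod_3)
  then show ?thesis
    unfolding Q_def[symmetric] of_nat_mult by presburger
qed

lemma low_penultimate_index_mod_3:
  assumes "1 \<le> q" "(int (q * q) + int ((4 * q - 2) div 2)) mod 3 = 1"
  shows "q mod 3 = 2"
proof -
  define Q where "Q = int q * int q"
  have "Q mod 3 = (if int q mod 3 = 0 then 0 else 1)"
    unfolding Q_def by (rule square_mod_3)
  moreover have "int ((4 * q - 2) div 2) = 2 * int q - 1"
    using assms(1) by simp
  ultimately show ?thesis
    using assms(2) unfolding Q_def[symmetric] of_nat_mult by presburger
qed

lemma mid_B_end_index_mod_3:
  assumes "1 \<le> j"
  shows "(mid_base k j + Btop k j - 1) mod 3 \<noteq> 1"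
proof -
  define J where "J = int j * int j"
  have J: "J mod 3 = (if int j mod 3 = 0 then 0 else 1)"
    unfolding J_def by (rule square_mod_3)
  have m: "mid_base k j mod 3 = (1 + J - int (eps k) * int j + int (eps k)) mod 3"
    using mid_base_mod_3[of k j] assms by (simp add: J_def)
  consider "eps k = 0" | "eps k = 1"
    using eps_le_1[of k] by linarith
  then show ?thesis
  proof cases
    case 1
    then have "mid_base k j mod 3 = (1 + J) mod 3"
      using m by simp
    then show ?thesis
      using J 1 unfolding Btop_def by presburger
  next
    case 2
    then have "mid_base k j mod 3 = (2 + (J - int j)) mod 3"
      using m by simp
    then show ?thesis
      using J 2 unfolding Btop_def by presburger
  qed
qed

lemma mid_C_penultimate_index_mod_3:
  "(mid_base k j + max (Btop k j + 1) 0 + (6 * int k - 2 - Btop k j) div 2 - 1) mod 3 \<noteq> 1"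
proof -
  define J where "J = int j * int j"
  have J: "J mod 3 = (if int j mod 3 = 0 then 0 else 1)"
    unfolding J_def by (rule square_mod_3)
  have m: "mid_base k j mod 3 = (1 + J - int (eps k) * int j + (if j = 0 then 0 else int (eps k))) mod 3"
    using mid_base_mod_3[of k j] by (simp add: J_def)
  consider "eps k = 0" | "eps k = 1" "1 \<le> j" | "eps k = 1" "j = 0"
    using eps_le_1[of k] by linarith
  then show ?thesis
  proof cases
    case 1
    then have "mid_base k j mod 3 = (1 + J) mod 3"
      using m by simp
    moreover have "max (Btop k j + 1) 0 + (6 * int k - 2 - Btop k j) div 2 = 2 * int j + 3 * int k"
      using 1 by (simp add: Btop_def max_def)
    ultimately show ?thesis
      using J by presburger
  next
    case 2
    then have "mid_base k j mod 3 = (2 + (J - int j)) mod 3"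
      using m by simp
    moreover have "max (Btop k j + 1) 0 + (6 * int k - 2 - Btop k j) div 2 = 2 * int j - 1 + 3 * int k"
      using 2 by (simp add: Btop_def max_def)
    ultimately show ?thesis
      using J by presburger
  next
    case 3
    then have "mid_base k j mod 3 = 1"
      using m by (simp add: J_def)
    moreover have "max (Btop k j + 1) 0 + (6 * int k - 2 - Btop k j) div 2 = 3 * int k"
      using 3 by (simp add: Btop_def)
    ultimately show ?thesis
      by presburger
  qed
qed

definition residues_distinct :: "nat \<Rightarrow> nat \<Rightarrow> bool" where
  "residues_distinct k y \<longleftrightarrow> distinct [y mod 3, Hnext k y mod 3, Hnext k (Hnext k y) mod 3]"

lemma residues_distinct_if_gaps:
  "Hnext k y = y + d \<Longrightarrow> Hnext k (y + d) = y + d + d' \<Longrightarrow> d mod 3 = d' mod 3 \<Longrightarrow> d mod 3 \<noteq> 0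
    \<Longrightarrow> residues_distinct k y"
  unfolding residues_distinct_def using distinct_mod_3_if_gaps by simp

lemma residues_distinct_low:
  assumes "0 < k" "r < aa k" "layer_mem (aa k) q r" "Hindex_at k q r mod 3 = 1" "q \<le> tt k"
  shows "residues_distinct k (q * aa k + r)"
proof -
  have r: "even r" "r \<le> 4 * q"
    using layer_mem_low[OF assms(5,2)] assms(3) by auto
  have idx: "Hindex_at k q r = int (q * q) + int (r div 2)"
    using Hindex_at_low[OF assms(5)] .
  have t: "4 * q \<le> 6 * k" "aa k = 6 * k + 1"
    using assms(5) tt_eps[of k] by (simp_all add: aa_def)
  have "r + 4 \<le> 4 * q \<or> r + 2 = 4 * q \<or> r = 4 * q"
    using r by presburger
  then consider (inner) "r + 4 \<le> 4 * q" | (penultimate) "r + 2 = 4 * q" | (last) "r = 4 * q"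
    by blast
  then show ?thesis
  proof cases
    case inner
    have "r + 2 < aa k"
      using inner t by linarith
    then show ?thesis
      using Hnext_low[OF assms(5,2)] Hnext_low[OF assms(5), of "r + 2"] inner
      by (intro residues_distinct_if_gaps[of k _ 2 2]) (simp_all add: add.assoc)
  next
    case penultimate
    have lt: "r + 2 < aa k"
      using penultimate t by linarith
    have r4: "r = 4 * q - 2" and q1: "1 \<le> q"
      using penultimate by linarith+
    have "q mod 3 = 2"
      using low_penultimate_index_mod_3[OF q1] assms(4) idx unfolding r4 by simp
    then obtain p where p: "q = 3 * p + 2"
      by (metis mod_div_mult_eq add.commute mult.commute)
    define X where "X = 2 * k - 4 * p - 3"
    have "aa k - 4 * q = 3 * X + 2"
      using t p unfolding X_def by linarith
    moreover have "(3 * X + 2) mod 3 = 2"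
      by presburger
    ultimately have "(aa k - 4 * q) mod 3 = 2"
      by simp
    moreover have "Hnext k (q * aa k + r + 2) = q * aa k + r + 2 + (aa k - 4 * q)"
      using Hnext_low[OF assms(5) lt] penultimate t by (simp add: add.assoc algebra_simps)
    ultimately show ?thesis
      using Hnext_low[OF assms(5,2)] penultimate
      by (intro residues_distinct_if_gaps[of k _ 2 "aa k - 4 * q"]) simp_all
  next
    case last
    then show ?thesis
      using low_end_index_mod_3[of q] assms(4) idx by simp
  qed
qed

lemma residues_distinct_mid:
  assumes "0 < k" "r < aa k" "layer_mem (aa k) q r" "Hindex_at k q r mod 3 = 1"
    "tt k < q" "q \<le> 3 * k"
  shows "residues_distinct k (q * aa k + r)"
proof -
  define j h where "j = q - tt k - 1" "h = Btop k j"
  have q: "q = tt k + 1 + j"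
    using assms(5) j_h_def by simp
  have h: "h = 4 * int j - 2 * int (eps k)" "even h"
    by (simp_all add: j_h_def Btop_def)
  have hb: "h \<le> 6 * int k - 4" "-2 \<le> h"
    using h(1) q assms(6) tt_eps_int[of k] eps_le_1[of k] by linarith+
  have a: "aa k = 6 * k + 1"
    by (simp add: aa_def)
  have r: "even r \<or> int r \<le> h"
    using layer_mem_mid[OF assms(5,6,2)] assms(3) by (simp add: j_h_def)
  have idx: "Hindex_at k q r = (if int r \<le> h then mid_base k j + int r
      else mid_base k j + max (h + 1) 0 + (int r - h) div 2 - 1)"
    using Hindex_at_mid[OF assms(5,6)] by (simp add: j_h_def)
  have nx: "Hnext k (q * aa k + s) = (if h \<le> int s \<and> s < 6 * k then q * aa k + s + 2 else q * aa k + s + 1)"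
    if "s < aa k" for s
    using Hnext_mid[OF assms(5,6) that] by (simp add: j_h_def)
  have "int r + 1 < h \<or> int r + 1 = h \<or> (h \<le> int r \<and> r + 4 \<le> 6 * k)
      \<or> (h < int r \<and> r + 2 = 6 * k) \<or> r = 6 * k"
  proof (cases "even r")
    case True
    have "r + 4 \<le> 6 * k \<or> r + 2 = 6 * k \<or> r = 6 * k"
      using True assms(2) a by presburger
    moreover have "int r + 1 \<noteq> h"
      using True h(2) by presburger
    ultimately show ?thesis
      using hb by linarith
  next
    case False
    then have "int r \<noteq> h"
      using h(2) by presburger
    then show ?thesis
      using False r by linarith
  qed
  then consider (B_inner) "int r + 1 < h" | (B_end) "int r + 1 = h" | (C_inner) "h \<le> int r" "r + 4 \<le> 6 * k"
    | (C_penultimate) "h < int r" "r + 2 = 6 * k" | (C_last) "r = 6 * k"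
    by blast
  then show ?thesis
  proof cases
    case B_inner
    have "r + 1 < aa k"
      using B_inner hb a by linarith
    then show ?thesis
      using nx[OF assms(2)] nx[of "r + 1"] B_inner
      by (intro residues_distinct_if_gaps[of k _ 1 1]) (auto simp: add.assoc)
  next
    case B_end
    then have "Hindex_at k q r = mid_base k j + h - 1"
      using idx by simp
    moreover have "1 \<le> j"
      using B_end h(1) eps_le_1[of k] by linarith
    ultimately show ?thesis
      using mid_B_end_index_mod_3[of j k] assms(4) by (simp add: j_h_def)
  next
    case C_inner
    have "r + 2 < aa k"
      using C_inner a by linarith
    then show ?thesis
      using nx[OF assms(2)] nx[of "r + 2"] C_inner
      by (intro residues_distinct_if_gaps[of k _ 2 2]) (auto simp: add.assoc)
  next
    case C_penultimate
    then have "int r = 6 * int k - 2"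
      by linarith
    then have "Hindex_at k q r = mid_base k j + max (h + 1) 0 + (6 * int k - 2 - h) div 2 - 1"
      using idx C_penultimate by simp
    then show ?thesis
      using mid_C_penultimate_index_mod_3[of k j] assms(4) by (simp add: j_h_def)
  next
    case C_last
    have next_band: "Hnext k ((q + 1) * aa k + 0) = (q + 1) * aa k + 0 + 1"
      using Hnext_band_start[of k "q + 1"] q by simp
    have e: "q * aa k + r + 1 = (q + 1) * aa k + 0"
      using C_last a by simp
    show ?thesis
    proof (rule residues_distinct_if_gaps[of k _ 1 1])
      show "Hnext k (q * aa k + r) = q * aa k + r + 1"
        using nx[OF assms(2)] C_last by simp
      show "Hnext k (q * aa k + r + 1) = q * aa k + r + 1 + 1"
        unfolding e by (rule next_band)
    qed simp_all
  qed
qed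

lemma residues_distinct_high:
  assumes "r < aa k" "3 * k < q"
  shows "residues_distinct k (q * aa k + r)"
proof -
  have "Hnext k (q * aa k + r + 1) = q * aa k + r + 1 + 1"
  proof (cases "r + 1 < aa k")
    case True
    then show ?thesis
      using Hnext_high[OF assms(2) True] by (simp add: add.assoc)
  next
    case False
    then have e: "q * aa k + r + 1 = (q + 1) * aa k + 0"
      using assms(1) by simp
    have "Hnext k ((q + 1) * aa k + 0) = (q + 1) * aa k + 0 + 1"
      using Hnext_high[of k "q + 1" 0] assms(2) aa_pos[of k] by simp
    then show ?thesis
      unfolding e .
  qed
  then show ?thesis
    using Hnext_high[OF assms(2,1)] by (intro residues_distinct_if_gaps[of k _ 1 1]) simp_all
qed

lemma infinite_Hset: "infinite (Hset k)"
proof -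
  have "{(2 * tt k + eps k + 1) * aa k..} \<subseteq> Hset k"
    by (auto simp: Hset_def)
  then show ?thesis
    using infinite_Ici finite_subset by blast
qed

lemma enumerate_Hset_0: "enumerate (Hset k) 0 = 0"
  unfolding enumerate_0 by (rule Least_equality) (auto simp: Hset_def)

lemma enumerate_Hset_Suc:
  "0 < k \<Longrightarrow> enumerate (Hset k) (Suc n) = Hnext k (enumerate (Hset k) n)"
  using enumerate_Suc_eq_next[OF infinite_Hset] Hnext_succ by blast

lemma Hindex_enumerate: "0 < k \<Longrightarrow> Hindex k (enumerate (Hset k) n) = int n"
  by (rule index_enumerate[OF infinite_Hset, where nxt = "Hnext k"])
    (use Hnext_succ in \<open>auto simp: enumerate_Hset_0 Hindex_def Hindex_at_def\<close>)

lemma residues_distinct_Hset: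
  assumes "0 < k" "y \<in> Hset k" "Hindex k y mod 3 = 1"
  shows "residues_distinct k y"
proof -
  define q r where "q = y div aa k" "r = y mod aa k"
  have y: "y = q * aa k + r" and r: "r < aa k"
    by (simp_all add: q_r_def aa_pos)
  have mem: "layer_mem (aa k) q r"
    using assms(2) mem_Hset_iff q_r_def by simp
  have idx: "Hindex_at k q r mod 3 = 1"
    using assms(3) Hindex_band[OF r] y by simp
  consider "q \<le> tt k" | "tt k < q" "q \<le> 3 * k" | "3 * k < q"
    by linarith
  then show ?thesis
    unfolding y
    by cases (use residues_distinct_low[OF assms(1) r mem idx] residues_distinct_mid[OF assms(1) r mem idx]
      residues_distinct_high[OF r] in blast)+
qed

lemma enumerate_Hset_block:
  assumes "0 < k"
  shows "bij_betw (\<lambda>j. enumerate (Hset k) (m * 3 + j) mod 3) {1..3} {0..<3}"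
proof (rule bij_betw_mod_3_if_distinct)
  define y where "y = enumerate (Hset k) (m * 3 + 1)"
  have "y \<in> Hset k"
    unfolding y_def by (rule enumerate_in_set[OF infinite_Hset])
  moreover have "Hindex k y mod 3 = 1"
    using Hindex_enumerate[OF assms] unfolding y_def by simp
  ultimately have "residues_distinct k y"
    by (rule residues_distinct_Hset[OF assms])
  moreover have "enumerate (Hset k) (m * 3 + 2) = Hnext k y"
    using enumerate_Hset_Suc[OF assms, of "m * 3 + 1"] unfolding y_def by simp
  moreover have "enumerate (Hset k) (m * 3 + 3) = Hnext k (Hnext k y)"
    using enumerate_Hset_Suc[OF assms, of "m * 3 + 2"] calculation(2) by (simp add: numeral_3_eq_3)
  ultimately show "distinct [enumerate (Hset k) (m * 3 + 1) mod 3, enumerate (Hset k) (m * 3 + 2) mod 3,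
      enumerate (Hset k) (m * 3 + 3) mod 3]"
    unfolding residues_distinct_def y_def by simp
qed

lemma enumerate_Hset_generators:
  assumes "0 < k"
  shows "enumerate (Hset k) ` {1..3} = {aa k, aa k + 2, aa k + 4}"
proof -
  have t: "1 \<le> tt k" "4 < aa k"
    using tt_pos[OF assms] assms by (simp_all add: aa_def)
  have "enumerate (Hset k) 1 = aa k"
    using enumerate_Hset_Suc[OF assms, of 0] by (simp add: enumerate_Hset_0 Hnext_def aa_pos)
  moreover have "enumerate (Hset k) 2 = aa k + 2"
    using enumerate_Hset_Suc[OF assms, of 1] calculation Hnext_low[of 1 k 0] t
    by (simp add: numeral_2_eq_2)
  moreover have "enumerate (Hset k) 3 = aa k + 4"
    using enumerate_Hset_Suc[OF assms, of 2] calculation(2) Hnext_low[of 1 k 2] t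
    by (simp add: numeral_3_eq_3)
  moreover have "{1..3::nat} = {1, 2, 3}"
    by auto
  ultimately show ?thesis
    by simp
qed

theorem perm_numerical_semigroup_Hset: "0 < k \<Longrightarrow> perm_numerical_semigroup 3 (Hset k)"
proof -
  assume k: "0 < k"
  have "UNIV - Hset k \<subseteq> {..<(2 * tt k + eps k + 1) * aa k}"
    by (auto simp: Hset_def)
  then have "finite (UNIV - Hset k)"
    using finite_subset by blast
  then show ?thesis
    unfolding perm_numerical_semigroup_def numerical_semigroup_def
    using submonoid_gen gen_eq_Hset enumerate_Hset_generators[OF k] enumerate_Hset_block[OF k]
    by metis
qed

theorem lemma4p4:
  fixes k :: nat
  assumes "0 < k"
  shows "(submonoid (Hset k) \<and> {aa k, aa k + 2, aa k + 4} \<subseteq> Hset k)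
    \<and> ((\<forall>i. 1 \<le> i \<and> i \<le> tt k - 1 \<longrightarrow> Aset k i <\<^sub>s Aset k (i + 1))
       \<and> (even k \<longrightarrow> Aset k (tt k) <\<^sub>s Bset k (tt k + 1) \<and> Bset k (tt k + 1) <\<^sub>s Cset k (tt k + 1))
       \<and> (odd k \<longrightarrow> Bset k (tt k + 1) = {} \<and> Aset k (tt k) <\<^sub>s Cset k (tt k + 1))
       \<and> (\<forall>i. tt k + 2 \<le> i \<and> i \<le> 2 * tt k + eps k \<longrightarrow> Bset k i <\<^sub>s Cset k i)
       \<and> (\<forall>i. tt k + 1 \<le> i \<and> i \<le> 2 * tt k + eps k - 1 \<longrightarrow> Cset k i <\<^sub>s Bset k (i + 1))
       \<and> Cset k (2 * tt k + eps k) <\<^sub>s {(2 * tt k + eps k + 1) * aa k..})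
    \<and> gen {aa k, aa k + 2, aa k + 4} = Hset k
    \<and> perm_numerical_semigroup 3 (Hset k)"
proof -
  have t: "2 * tt k + eps k = 3 * k" "tt k < 3 * k"
    using tt_eps[of k] tt_pos[OF assms] by linarith+
  have gens: "{aa k, aa k + 2, aa k + 4} \<subseteq> Hset k"
    unfolding gen_eq_Hset[symmetric] by (auto intro: gen_base)
  have "submonoid (Hset k)"
    using submonoid_gen gen_eq_Hset by metis
  moreover have "\<forall>i. 1 \<le> i \<and> i \<le> tt k - 1 \<longrightarrow> Aset k i <\<^sub>s Aset k (i + 1)"
  proof (intro allI impI)
    fix i
    assume "1 \<le> i \<and> i \<le> tt k - 1"
    then show "Aset k i <\<^sub>s Aset k (i + 1)"
      by (intro Aset_less_Aset) linarith
  qed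
  moreover have "even k \<longrightarrow> Aset k (tt k) <\<^sub>s Bset k (tt k + 1) \<and> Bset k (tt k + 1) <\<^sub>s Cset k (tt k + 1)"
    using Aset_less_Bset Bset_less_Cset[of k "tt k + 1"] t by simp
  moreover have "odd k \<longrightarrow> Bset k (tt k + 1) = {} \<and> Aset k (tt k) <\<^sub>s Cset k (tt k + 1)"
    using Bset_empty Aset_less_Cset by simp
  moreover have "\<forall>i. tt k + 2 \<le> i \<and> i \<le> 2 * tt k + eps k \<longrightarrow> Bset k i <\<^sub>s Cset k i"
    using Bset_less_Cset t by simp
  moreover have "\<forall>i. tt k + 1 \<le> i \<and> i \<le> 2 * tt k + eps k - 1 \<longrightarrow> Cset k i <\<^sub>s Bset k (i + 1)"
  proof (intro allI impI)
    fix i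
    assume "tt k + 1 \<le> i \<and> i \<le> 2 * tt k + eps k - 1"
    then show "Cset k i <\<^sub>s Bset k (i + 1)"
      using t by (intro Cset_less_Bset) linarith+
  qed
  moreover have "Cset k (2 * tt k + eps k) <\<^sub>s {(2 * tt k + eps k + 1) * aa k..}"
    using Cset_less_tail[OF assms] t by simp
  ultimately show ?thesis
    using gens gen_eq_Hset perm_numerical_semigroup_Hset[OF assms] by blast
qed

end
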